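(* Let $(u_S,u_R)$ be an environment satisfying scant-indifferences. If commitment has no value, then there exist a partitional messaging strategy $\hat\sigma$ and a pure action strategy $\hat\rho$ such that $(\hat\sigma,\hat\rho)$ is a cheap-talk equilibrium, $U_S(\hat\sigma,\hat\rho)$ equals the persuasion payoff, and $|M_{\hat\sigma}|\le|A|$.
   Context: $A=\{a_1,\dots,a_{|A|}\}$ and $\Omega$ are finite nonempty sets, $\mu_0$ a prior on $\Omega$ with $\mu_0(\omega)>0$ for all $\omega$, and $M$ a finite message set with $|M|>\max\{|\Omega|,|A|\}$. An environment is a pair of functions $u_S,u_R:A\times\Omega\to[0,1]$. A messaging strategy is $\sigma:\Omega\to\Delta M$; an action strategy is $\rho:M\to\Delta A$; $\rho$ is pure if every $\rho(\cdot|m)$ is degenerate. $U_i(\sigma,\rho)=\sum_{\omega,m,a}\mu_0(\omega)\sigma(m|\omega)\rho(a|m)u_i(a,\omega)$. $(\sigma,\rho)$ is S-BR if $\sigma\in\arg\max_{\sigma'}U_S(\sigma',\rho)$, R-BR if $\rho\in\arg\max_{\rho'}U_R(\sigma,\rho')$; a cheap-talk equilibrium is S-BR and R-BR. The persuasion payoff is the maximum of $U_S$ over R-BR profiles; the cheap-talk payoff is the maximum of $U_S$ over cheap-talk equilibria; commitment has no value if these are equal. $\sigma$ is partitional if for every $\omega$ some $m$ has $\sigma(m|\omega)=1$. $M_\sigma=\{m:\sigma(m|\omega)>0\text{ for some }\omega\}$. Scant-indifferences: for each $a\in A$ let $\mathbf u_S(a)=u_S(a,\cdot)\in\mathbb R^{|\Omega|}$,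 $\mathbf u_R(a)=u_R(a,\cdot)$. For each $i$, the expanded-indifference matrix $T^i$ has $|\Omega|$ columns and rows: $\mathbf u_S(a_j)-\mathbf u_S(a_i)$ for each $j\ne i$, then $\mathbf u_R(a_j)-\mathbf u_R(a_i)$ for each $j\ne i$, then the rows of the $|\Omega|\times|\Omega|$ identity matrix. A row-submatrix of $T^i$ is a matrix obtained by deleting some rows. The environment satisfies scant-indifferences if for every $i$ every row-submatrix of $T^i$ has full rank. *)

theory Defs
  imports "HOL-Analysis.Analysis" "HOL-Probability.Probability"
begin

text \<open>Actions 'a, states 'w, messages 'm (all finite types).
  A messaging strategy is a map 'w \<Rightarrow> 'm pmf, an action strategy a map 'm \<Rightarrow> 'a pmf.\<close>

definition U :: "'w pmf \<Rightarrow> ('a \<Rightarrow> 'w \<Rightarrow> real) \<Rightarrow> ('w::finite \<Rightarrow> 'm::finite pmf)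
                   \<Rightarrow> ('m \<Rightarrow> 'a::finite pmf) \<Rightarrow> real" where
  "U mu0 u \<sigma> \<rho> = (\<Sum>\<omega>\<in>UNIV. \<Sum>m\<in>UNIV. \<Sum>a\<in>UNIV.
       pmf mu0 \<omega> * pmf (\<sigma> \<omega>) m * pmf (\<rho> m) a * u a \<omega>)"

definition S_BR :: "'w pmf \<Rightarrow> ('a \<Rightarrow> 'w \<Rightarrow> real) \<Rightarrow> ('w::finite \<Rightarrow> 'm::finite pmf)
                   \<Rightarrow> ('m \<Rightarrow> 'a::finite pmf) \<Rightarrow> bool" where
  "S_BR mu0 uS \<sigma> \<rho> \<longleftrightarrow> (\<forall>\<sigma>'. U mu0 uS \<sigma>' \<rho> \<le> U mu0 uS \<sigma> \<rho>)"

definition R_BR :: "'w pmf \<Rightarrow> ('a \<Rightarrow> 'w \<Rightarrow> real) \<Rightarrow> ('w::finite \<Rightarrow> 'm::finite pmf)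
                   \<Rightarrow> ('m \<Rightarrow> 'a::finite pmf) \<Rightarrow> bool" where
  "R_BR mu0 uR \<sigma> \<rho> \<longleftrightarrow> (\<forall>\<rho>'. U mu0 uR \<sigma> \<rho>' \<le> U mu0 uR \<sigma> \<rho>)"

definition cheap_talk_eq :: "'w pmf \<Rightarrow> ('a \<Rightarrow> 'w \<Rightarrow> real) \<Rightarrow> ('a \<Rightarrow> 'w \<Rightarrow> real)
      \<Rightarrow> ('w::finite \<Rightarrow> 'm::finite pmf) \<Rightarrow> ('m \<Rightarrow> 'a::finite pmf) \<Rightarrow> bool" where
  "cheap_talk_eq mu0 uS uR \<sigma> \<rho> \<longleftrightarrow> S_BR mu0 uS \<sigma> \<rho> \<and> R_BR mu0 uR \<sigma> \<rho>"

text \<open>Persuasion payoff: maximum (= supremum, attained) of U_S over R-BR profiles;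
  the message type is passed as an itself-parameter.\<close>
definition persuasion_payoff :: "'w::finite pmf \<Rightarrow> ('a::finite \<Rightarrow> 'w \<Rightarrow> real) \<Rightarrow> ('a \<Rightarrow> 'w \<Rightarrow> real)
      \<Rightarrow> 'm::finite itself \<Rightarrow> real" where
  "persuasion_payoff mu0 uS uR (TYPE('m)) =
     Sup {U mu0 uS \<sigma> \<rho> | (\<sigma> :: 'w \<Rightarrow> 'm pmf) (\<rho> :: 'm \<Rightarrow> 'a pmf).
            R_BR mu0 uR \<sigma> \<rho>}"

definition cheap_talk_payoff :: "'w::finite pmf \<Rightarrow> ('a::finite \<Rightarrow> 'w \<Rightarrow> real) \<Rightarrow> ('a \<Rightarrow> 'w \<Rightarrow> real)
      \<Rightarrow> 'm::finite itself \<Rightarrow> real" where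
  "cheap_talk_payoff mu0 uS uR (TYPE('m)) =
     Sup {U mu0 uS \<sigma> \<rho> | (\<sigma> :: 'w \<Rightarrow> 'm pmf) (\<rho> :: 'm \<Rightarrow> 'a pmf).
            cheap_talk_eq mu0 uS uR \<sigma> \<rho>}"

definition partitional :: "('w \<Rightarrow> 'm pmf) \<Rightarrow> bool" where
  "partitional \<sigma> \<longleftrightarrow> (\<forall>\<omega>. \<exists>m. pmf (\<sigma> \<omega>) m = 1)"

definition pure_strategy :: "('m \<Rightarrow> 'a pmf) \<Rightarrow> bool" where
  "pure_strategy \<rho> \<longleftrightarrow> (\<forall>m. \<exists>a. \<rho> m = return_pmf a)"

definition used_messages :: "('w \<Rightarrow> 'm pmf) \<Rightarrow> 'm set" where
  "used_messages \<sigma> = {m. \<exists>\<omega>. pmf (\<sigma> \<omega>) m > 0}"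

text \<open>Row indices of the expanded-indifference matrix T^i.\<close>
datatype ('a, 'w) tidx = SDiff 'a | RDiff 'a | IdRow 'w

definition T_indices :: "'a \<Rightarrow> ('a, 'w) tidx set" where
  "T_indices i = {SDiff j | j. j \<noteq> i} \<union> {RDiff j | j. j \<noteq> i} \<union> range IdRow"

definition T_row :: "('a \<Rightarrow> 'w \<Rightarrow> real) \<Rightarrow> ('a \<Rightarrow> 'w \<Rightarrow> real) \<Rightarrow> 'a
                      \<Rightarrow> ('a, 'w::finite) tidx \<Rightarrow> real ^ 'w" where
  "T_row uS uR i k = (case k of
       SDiff j \<Rightarrow> (\<chi> \<omega>. uS j \<omega> - uS i \<omega>)
     | RDiff j \<Rightarrow> (\<chi> \<omega>. uR j \<omega> - uR i \<omega>)
     | IdRow w \<Rightarrow> (\<chi> \<omega>. if \<omega> = w then 1 else 0))"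

text \<open>Rank of the row-submatrix with row index set I = dimension of its row space;
  full rank means rank = min (number of rows) (number of columns).\<close>
definition scant_indifferences :: "('a \<Rightarrow> 'w \<Rightarrow> real) \<Rightarrow> ('a \<Rightarrow> 'w::finite \<Rightarrow> real) \<Rightarrow> bool" where
  "scant_indifferences uS uR \<longleftrightarrow>
     (\<forall>i I. I \<subseteq> T_indices i \<longrightarrow>
        dim (T_row uS uR i ` I) = min (card I) CARD('w))"

end

theory Submission
  imports Defs
begin

text \<open>By compactness of the strategy spaces the cheap-talk payoff is attained by an equilibrium,
  and since commitment has no value this equilibrium is also optimal among all profiles in which
  the receiver best responds. Such an optimal profile has the receiver play a pure action after
  every message that is sent: if two actions were mixed, scant-indifferences would provide a
  perturbation splitting the message's posterior into two posteriors, each obeying one of the two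
  actions, which the sender strictly prefers. Scant-indifferences also makes the sender's
  preference over actions strict in every state, and in equilibrium she is indifferent among the
  messages she sends, so each state induces a single action. Recommending that action directly,
  i.e. pooling the messages by the action they induce, gives a partitional pure equilibrium with
  the same payoff that uses at most one message per action.\<close>

section \<open>Posteriors and best responses\<close>

text \<open>The posterior after message m is kept unnormalised: it is the joint probability of the state
  and m.\<close>
definition posterior :: "'w pmf \<Rightarrow> ('w \<Rightarrow> 'm pmf) \<Rightarrow> 'm \<Rightarrow> 'w \<Rightarrow> real" where
  "posterior mu0 \<sigma> m \<omega> = pmf mu0 \<omega> * pmf (\<sigma> \<omega>) m"

definition expected :: "('a \<Rightarrow> 'w::finite \<Rightarrow> real) \<Rightarrow> ('w \<Rightarrow> real) \<Rightarrow> 'a \<Rightarrow> real" where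
  "expected u y a = (\<Sum>\<omega>\<in>UNIV. y \<omega> * u a \<omega>)"

definition obedient :: "('a \<Rightarrow> 'w::finite \<Rightarrow> real) \<Rightarrow> ('w \<Rightarrow> real) \<Rightarrow> 'a \<Rightarrow> bool" where
  "obedient u y c \<longleftrightarrow> (\<forall>b. expected u y b \<le> expected u y c)"

definition message_value :: "('m \<Rightarrow> 'a::finite pmf) \<Rightarrow> ('a \<Rightarrow> 'w \<Rightarrow> real) \<Rightarrow> 'm \<Rightarrow> 'w \<Rightarrow> real" where
  "message_value \<rho> u m \<omega> = (\<Sum>a\<in>UNIV. pmf (\<rho> m) a * u a \<omega>)"

lemma sum_pmf_times_const [simp]: "(\<Sum>x\<in>UNIV. pmf p x * c) = (c :: real)"
  for p :: "'a::finite pmf"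
  by (simp add: sum_distrib_right[symmetric] sum_pmf_eq_1)

lemma sum_pmf_times_le:
  fixes f :: "'a::finite \<Rightarrow> real"
  assumes "\<And>x. x \<in> set_pmf p \<Longrightarrow> f x \<le> M"
  shows "(\<Sum>x\<in>UNIV. pmf p x * f x) \<le> M"
proof -
  have "pmf p x * f x \<le> pmf p x * M" for x
    using assms by (cases "x \<in> set_pmf p") (auto simp: set_pmf_iff mult_left_mono)
  then have "(\<Sum>x\<in>UNIV. pmf p x * f x) \<le> (\<Sum>x\<in>UNIV. pmf p x * M)"
    by (rule sum_mono)
  then show ?thesis by simp
qed

lemma sum_pmf_times_eq:
  fixes f :: "'a::finite \<Rightarrow> real"
  assumes "\<And>x. x \<in> set_pmf p \<Longrightarrow> f x = c"
  shows "(\<Sum>x\<in>UNIV. pmf p x * f x) = c"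
proof -
  have "(\<Sum>x\<in>UNIV. pmf p x * f x) = (\<Sum>x\<in>UNIV. pmf p x * c)"
    using assms by (intro sum.cong) (auto simp: set_pmf_iff)
  then show ?thesis by simp
qed

lemma sum_pmf_times_ge_bound_imp_eq:
  fixes f :: "'a::finite \<Rightarrow> real"
  assumes le: "\<And>x. x \<in> set_pmf p \<Longrightarrow> f x \<le> M" and ge: "M \<le> (\<Sum>x\<in>UNIV. pmf p x * f x)"
    and x: "x \<in> set_pmf p"
  shows "f x = M"
proof (rule ccontr)
  assume "f x \<noteq> M"
  with le x have "pmf p x * f x < pmf p x * M"
    by (intro mult_strict_left_mono) (auto simp: order_less_le set_pmf_iff)
  moreover have "pmf p y * f y \<le> pmf p y * M" for y
    using le by (cases "y \<in> set_pmf p") (auto simp: set_pmf_iff)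
  ultimately have "(\<Sum>y\<in>UNIV. pmf p y * f y) < (\<Sum>y\<in>UNIV. pmf p y * M)"
    by (intro sum_strict_mono_ex1) auto
  with ge show False by simp
qed

lemma sum_fun_upd_UNIV:
  fixes H :: "'x::finite \<Rightarrow> 'b \<Rightarrow> real"
  shows "(\<Sum>y\<in>UNIV. H y ((g(x := q)) y)) = (\<Sum>y\<in>UNIV. H y (g y)) - H x (g x) + H x q"
  by (simp add: sum.remove[of UNIV x])

lemma ex_maximizer: "\<exists>k. \<forall>j. f j \<le> f k" for f :: "'a::finite \<Rightarrow> 'b::linorder"
proof -
  have "Max (range f) \<in> range f" by (rule Max_in) auto
  then show ?thesis by (metis Max_ge finite rangeE rangeI finite_imageI)
qed

lemma sum_mixtures_maximal_iff:
  fixes f :: "'x::finite \<Rightarrow> 'i::finite \<Rightarrow> real" and g :: "'x \<Rightarrow> 'i pmf"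
  shows "(\<forall>g'. (\<Sum>x\<in>UNIV. \<Sum>i\<in>UNIV. pmf (g' x) i * f x i) \<le> (\<Sum>x\<in>UNIV. \<Sum>i\<in>UNIV. pmf (g x) i * f x i))
     \<longleftrightarrow> (\<forall>x. \<forall>i\<in>set_pmf (g x). \<forall>j. f x j \<le> f x i)"
    (is "(\<forall>g'. ?F g' \<le> ?F g) \<longleftrightarrow> _")
proof
  let ?H = "\<lambda>x p. \<Sum>i\<in>UNIV. pmf p i * f x i"
  assume max: "\<forall>g'. ?F g' \<le> ?F g"
  have dev: "f x j \<le> ?H x (g x)" for x j
    using max[rule_format, of "g(x := return_pmf j)"] sum_fun_upd_UNIV[of ?H g x "return_pmf j"] by simp
  show "\<forall>x. \<forall>i\<in>set_pmf (g x). \<forall>j. f x j \<le> f x i"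
  proof (intro allI ballI)
    fix x i j assume i: "i \<in> set_pmf (g x)"
    obtain k where k: "\<And>j. f x j \<le> f x k"
      using ex_maximizer by blast
    have "f x i = f x k"
      by (rule sum_pmf_times_ge_bound_imp_eq[OF _ dev i]) (use k in auto)
    then show "f x j \<le> f x i" using k by simp
  qed
next
  assume supp: "\<forall>x. \<forall>i\<in>set_pmf (g x). \<forall>j. f x j \<le> f x i"
  show "\<forall>g'. ?F g' \<le> ?F g"
  proof
    fix g'
    have "(\<Sum>i\<in>UNIV. pmf (g' x) i * f x i) \<le> (\<Sum>i\<in>UNIV. pmf (g x) i * f x i)" for x
    proof -
      obtain i0 where i0: "i0 \<in> set_pmf (g x)" by (meson set_pmf_not_empty ex_in_conv)
      have "(\<Sum>i\<in>UNIV. pmf (g x) i * f x i) = f x i0"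
        using supp i0 by (intro sum_pmf_times_eq) (meson order_antisym)
      moreover have "(\<Sum>i\<in>UNIV. pmf (g' x) i * f x i) \<le> f x i0"
        using supp i0 by (intro sum_pmf_times_le) blast
      ultimately show ?thesis by simp
    qed
    then show "?F g' \<le> ?F g" by (rule sum_mono)
  qed
qed

lemma U_eq_sum_posterior:
  "U mu0 u \<sigma> \<rho> = (\<Sum>m\<in>UNIV. \<Sum>a\<in>UNIV. pmf (\<rho> m) a * expected u (posterior mu0 \<sigma> m) a)"
proof -
  have "U mu0 u \<sigma> \<rho> = (\<Sum>m\<in>UNIV. \<Sum>\<omega>\<in>UNIV. \<Sum>a\<in>UNIV. pmf mu0 \<omega> * pmf (\<sigma> \<omega>) m * pmf (\<rho> m) a * u a \<omega>)"
    unfolding U_def by (rule sum.swap)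
  also have "\<dots> = (\<Sum>m\<in>UNIV. \<Sum>a\<in>UNIV. \<Sum>\<omega>\<in>UNIV. pmf mu0 \<omega> * pmf (\<sigma> \<omega>) m * pmf (\<rho> m) a * u a \<omega>)"
    by (rule sum.cong[OF refl], rule sum.swap)
  finally show ?thesis
    by (simp add: expected_def posterior_def sum_distrib_left mult_ac)
qed

lemma U_eq_sum_message_value:
  "U mu0 u \<sigma> \<rho> = (\<Sum>\<omega>\<in>UNIV. pmf mu0 \<omega> * (\<Sum>m\<in>UNIV. pmf (\<sigma> \<omega>) m * message_value \<rho> u m \<omega>))"
  unfolding U_def message_value_def by (simp add: sum_distrib_left mult_ac)

lemma U_le:
  assumes "\<And>a \<omega>. u a \<omega> \<le> M"
  shows "U mu0 u \<sigma> \<rho> \<le> M"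
  unfolding U_eq_sum_message_value message_value_def
  using assms by (intro sum_pmf_times_le) auto

lemma R_BR_iff_obedient:
  "R_BR mu0 uR \<sigma> \<rho> \<longleftrightarrow> (\<forall>m. \<forall>c\<in>set_pmf (\<rho> m). obedient uR (posterior mu0 \<sigma> m) c)"
  unfolding R_BR_def U_eq_sum_posterior obedient_def by (rule sum_mixtures_maximal_iff)

lemma S_BR_iff_optimal_messages:
  assumes prior_pos: "\<forall>\<omega>. pmf mu0 \<omega> > 0"
  shows "S_BR mu0 uS \<sigma> \<rho> \<longleftrightarrow>
    (\<forall>\<omega>. \<forall>m\<in>set_pmf (\<sigma> \<omega>). \<forall>m'. message_value \<rho> uS m' \<omega> \<le> message_value \<rho> uS m \<omega>)"
proof -
  have "U mu0 uS \<sigma>' \<rho> = (\<Sum>\<omega>\<in>UNIV. \<Sum>m\<in>UNIV. pmf (\<sigma>' \<omega>) m * (pmf mu0 \<omega> * message_value \<rho> uS m \<omega>))"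
    for \<sigma>'
    unfolding U_eq_sum_message_value by (simp add: sum_distrib_left mult_ac)
  then have "S_BR mu0 uS \<sigma> \<rho> \<longleftrightarrow>
    (\<forall>\<omega>. \<forall>m\<in>set_pmf (\<sigma> \<omega>). \<forall>m'. pmf mu0 \<omega> * message_value \<rho> uS m' \<omega> \<le> pmf mu0 \<omega> * message_value \<rho> uS m \<omega>)"
    unfolding S_BR_def by (simp only: sum_mixtures_maximal_iff)
  with prior_pos show ?thesis by simp
qed

lemma expected_add: "expected u (\<lambda>\<omega>. y \<omega> + z \<omega>) a = expected u y a + expected u z a"
  unfolding expected_def by (simp add: distrib_right sum.distrib)

lemma expected_scale: "expected u (\<lambda>\<omega>. t * y \<omega>) a = t * expected u y a"
  unfolding expected_def by (simp add: sum_distrib_left mult_ac)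

lemma expected_sum: "expected u (\<lambda>\<omega>. \<Sum>i\<in>I. y i \<omega>) a = (\<Sum>i\<in>I. expected u (y i) a)"
  unfolding expected_def by (simp add: sum_distrib_right sum.swap[of _ I])

lemma expected_zero [simp]: "expected u (\<lambda>\<omega>. 0) a = 0"
  unfolding expected_def by simp

lemma obedient_zero [simp]: "obedient u (\<lambda>\<omega>. 0) c"
  unfolding obedient_def by simp

lemma obedient_add: "obedient u y c \<Longrightarrow> obedient u z c \<Longrightarrow> obedient u (\<lambda>\<omega>. y \<omega> + z \<omega>) c"
  unfolding obedient_def expected_add by (meson add_mono)

lemma obedient_scale: "obedient u y c \<Longrightarrow> 0 \<le> t \<Longrightarrow> obedient u (\<lambda>\<omega>. t * y \<omega>) c"
  unfolding obedient_def expected_scale by (simp add: mult_left_mono)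

lemma obedient_sum:
  "(\<And>i. i \<in> I \<Longrightarrow> obedient u (y i) c) \<Longrightarrow> obedient u (\<lambda>\<omega>. \<Sum>i\<in>I. y i \<omega>) c"
  unfolding obedient_def expected_sum by (simp add: sum_mono)

section \<open>Pooling messages and recommending actions\<close>

definition pooled_posterior ::
    "'w pmf \<Rightarrow> ('w \<Rightarrow> 'm pmf) \<Rightarrow> ('m \<Rightarrow> 'a pmf) \<Rightarrow> 'm set \<Rightarrow> 'a \<Rightarrow> 'w \<Rightarrow> real" where
  "pooled_posterior mu0 \<sigma> \<rho> M a \<omega> = (\<Sum>m\<in>M. pmf (\<rho> m) a * posterior mu0 \<sigma> m \<omega>)"

lemma posterior_nonneg: "0 \<le> posterior mu0 \<sigma> m \<omega>"
  unfolding posterior_def by simp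

lemma pooled_posterior_nonneg: "0 \<le> pooled_posterior mu0 \<sigma> \<rho> M a \<omega>"
  unfolding pooled_posterior_def by (simp add: posterior_nonneg sum_nonneg)

lemma sum_posterior: "(\<Sum>m\<in>UNIV. posterior mu0 \<sigma> m \<omega>) = pmf mu0 \<omega>"
  for \<sigma> :: "'w \<Rightarrow> 'm::finite pmf"
  unfolding posterior_def by (simp add: sum_distrib_left[symmetric] sum_pmf_eq_1)

lemma sum_pooled_posterior:
  "(\<Sum>a\<in>UNIV. pooled_posterior mu0 \<sigma> \<rho> M a \<omega>) = (\<Sum>m\<in>M. posterior mu0 \<sigma> m \<omega>)"
  for \<rho> :: "'m \<Rightarrow> 'a::finite pmf"
  unfolding pooled_posterior_def by (subst sum.swap) (simp add: sum_distrib_right[symmetric] sum_pmf_eq_1)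

lemma expected_pooled_posterior:
  "expected u (pooled_posterior mu0 \<sigma> \<rho> M c) b = (\<Sum>m\<in>M. pmf (\<rho> m) c * expected u (posterior mu0 \<sigma> m) b)"
  unfolding pooled_posterior_def expected_sum expected_scale ..

lemma U_eq_sum_pooled_posterior:
  "U mu0 u \<sigma> \<rho> = (\<Sum>a\<in>UNIV. expected u (pooled_posterior mu0 \<sigma> \<rho> UNIV a) a)"
  unfolding U_eq_sum_posterior expected_pooled_posterior by (rule sum.swap)

lemma R_BR_obedient_pooled_posterior:
  assumes "R_BR mu0 uR \<sigma> \<rho>"
  shows "obedient uR (pooled_posterior mu0 \<sigma> \<rho> M c) c"
  unfolding pooled_posterior_def
proof (rule obedient_sum)
  fix m
  show "obedient uR (\<lambda>\<omega>. pmf (\<rho> m) c * posterior mu0 \<sigma> m \<omega>) c"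
  proof (cases "c \<in> set_pmf (\<rho> m)")
    case True
    with assms show ?thesis by (simp add: R_BR_iff_obedient obedient_scale)
  next
    case False
    then show ?thesis by (simp add: set_pmf_iff)
  qed
qed

lemma pmf_embed_pmf_finite:
  fixes f :: "'a::finite \<Rightarrow> real"
  assumes "\<And>x. 0 \<le> f x" "sum f UNIV = 1"
  shows "pmf (embed_pmf f) x = f x"
proof (rule pmf_embed_pmf)
  show "(\<integral>\<^sup>+x. ennreal (f x) \<partial>count_space UNIV) = 1"
    using assms by (simp add: nn_integral_count_space_finite)
qed (use assms in simp)

definition recommendation :: "'w pmf \<Rightarrow> ('a \<Rightarrow> 'm) \<Rightarrow> ('a::finite \<Rightarrow> 'w \<Rightarrow> real) \<Rightarrow> 'w \<Rightarrow> 'm pmf" where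
  "recommendation mu0 e X \<omega> = map_pmf e (embed_pmf (\<lambda>a. X a \<omega> / pmf mu0 \<omega>))"

context
  fixes mu0 :: "'w::finite pmf" and e :: "'a::finite \<Rightarrow> 'm::finite" and X :: "'a \<Rightarrow> 'w \<Rightarrow> real"
  assumes prior_pos: "\<forall>\<omega>. pmf mu0 \<omega> > 0" and inj: "inj e"
    and X_nonneg: "\<forall>a \<omega>. 0 \<le> X a \<omega>" and X_sum: "\<forall>\<omega>. (\<Sum>a\<in>UNIV. X a \<omega>) = pmf mu0 \<omega>"
begin

private lemma pmf_embed: "pmf (embed_pmf (\<lambda>a. X a \<omega> / pmf mu0 \<omega>)) a = X a \<omega> / pmf mu0 \<omega>"
proof (rule pmf_embed_pmf_finite)
  show "(\<Sum>a\<in>UNIV. X a \<omega> / pmf mu0 \<omega>) = 1"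
    using X_sum prior_pos by (simp add: sum_divide_distrib[symmetric] less_imp_neq[symmetric])
qed (use X_nonneg prior_pos in simp)

lemma set_pmf_recommendation: "set_pmf (recommendation mu0 e X \<omega>) = e ` {a. X a \<omega> \<noteq> 0}"
proof -
  have "set_pmf (embed_pmf (\<lambda>a. X a \<omega> / pmf mu0 \<omega>)) = {a. X a \<omega> \<noteq> 0}"
    using prior_pos[rule_format, of \<omega>] by (simp add: set_pmf_eq pmf_embed)
  then show ?thesis by (simp add: recommendation_def)
qed

lemma pmf_recommendation: "pmf (recommendation mu0 e X \<omega>) (e a) = X a \<omega> / pmf mu0 \<omega>"
  by (simp add: recommendation_def pmf_map_inj'[OF inj] pmf_embed)

lemma posterior_recommendation: "posterior mu0 (recommendation mu0 e X) (e a) = X a"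
proof
  fix \<omega>
  show "posterior mu0 (recommendation mu0 e X) (e a) \<omega> = X a \<omega>"
    using prior_pos[rule_format, of \<omega>] by (simp add: posterior_def pmf_recommendation)
qed

lemma partitional_recommendation:
  assumes "\<And>\<omega>. X (f \<omega>) \<omega> = pmf mu0 \<omega>"
  shows "partitional (recommendation mu0 e X)"
  unfolding partitional_def
proof
  fix \<omega>
  have "pmf (recommendation mu0 e X \<omega>) (e (f \<omega>)) = 1"
    using assms prior_pos[rule_format, of \<omega>] by (simp add: pmf_recommendation)
  then show "\<exists>m. pmf (recommendation mu0 e X \<omega>) m = 1" ..
qed

lemma card_used_messages_recommendation: "card (used_messages (recommendation mu0 e X)) \<le> CARD('a)"
proof -
  have "used_messages (recommendation mu0 e X) \<subseteq> range e"
    by (auto simp: used_messages_def pmf_positive_iff set_pmf_recommendation)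
  then have "card (used_messages (recommendation mu0 e X)) \<le> card (range e)"
    by (simp add: card_mono)
  also have "\<dots> \<le> CARD('a)"
    by (rule card_image_le) simp
  finally show ?thesis .
qed

lemma posterior_recommendation_outside:
  assumes "m \<notin> range e"
  shows "posterior mu0 (recommendation mu0 e X) m = (\<lambda>\<omega>. 0)"
proof
  fix \<omega>
  have "m \<notin> set_pmf (recommendation mu0 e X \<omega>)"
    using assms by (auto simp: set_pmf_recommendation)
  then show "posterior mu0 (recommendation mu0 e X) m \<omega> = 0"
    by (simp add: posterior_def set_pmf_iff)
qed

lemma U_recommendation:
  "U mu0 u (recommendation mu0 e X) (\<lambda>m. return_pmf (r m)) = (\<Sum>a\<in>UNIV. expected u (X a) (r (e a)))"
proof -
  let ?F = "\<lambda>m. expected u (posterior mu0 (recommendation mu0 e X) m) (r m)"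
  have "U mu0 u (recommendation mu0 e X) (\<lambda>m. return_pmf (r m)) = sum ?F UNIV"
    by (simp add: U_eq_sum_posterior)
  also have "\<dots> = sum ?F (range e)"
    by (rule sum.mono_neutral_right) (auto simp: posterior_recommendation_outside)
  also have "\<dots> = (\<Sum>a\<in>UNIV. expected u (X a) (r (e a)))"
    by (simp add: sum.reindex[OF inj] posterior_recommendation)
  finally show ?thesis .
qed

lemma R_BR_recommendation:
  assumes "\<And>a. obedient uR (X a) (r (e a))"
  shows "R_BR mu0 uR (recommendation mu0 e X) (\<lambda>m. return_pmf (r m))"
  unfolding R_BR_iff_obedient
proof (intro allI ballI)
  fix m c assume "c \<in> set_pmf (return_pmf (r m))"
  then have c: "c = r m" by simp
  show "obedient uR (posterior mu0 (recommendation mu0 e X) m) c"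
  proof (cases "m \<in> range e")
    case True
    then obtain a where "m = e a" by blast
    with assms c show ?thesis by (simp add: posterior_recommendation)
  next
    case False
    then show ?thesis by (simp add: posterior_recommendation_outside)
  qed
qed

end

section \<open>Persuasion-optimal profiles\<close>

definition persuasion_optimal :: "'w pmf \<Rightarrow> ('a \<Rightarrow> 'w \<Rightarrow> real) \<Rightarrow> ('a \<Rightarrow> 'w \<Rightarrow> real)
      \<Rightarrow> ('w::finite \<Rightarrow> 'm::finite pmf) \<Rightarrow> ('m \<Rightarrow> 'a::finite pmf) \<Rightarrow> bool" where
  "persuasion_optimal mu0 uS uR \<sigma> \<rho> \<longleftrightarrow> R_BR mu0 uR \<sigma> \<rho> \<and>
     (\<forall>(\<sigma>' :: 'w \<Rightarrow> 'm pmf) \<rho>'. R_BR mu0 uR \<sigma>' \<rho>' \<longrightarrow> U mu0 uS \<sigma>' \<rho>' \<le> U mu0 uS \<sigma> \<rho>)"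

lemma persuasion_optimal_if_attains_payoff:
  fixes \<sigma> :: "'w::finite \<Rightarrow> 'm::finite pmf" and \<rho> :: "'m \<Rightarrow> 'a::finite pmf"
  assumes R: "R_BR mu0 uR \<sigma> \<rho>" and payoff: "U mu0 uS \<sigma> \<rho> = persuasion_payoff mu0 uS uR TYPE('m)"
    and bounded: "\<And>a \<omega>. uS a \<omega> \<le> M"
  shows "persuasion_optimal mu0 uS uR \<sigma> \<rho>"
  unfolding persuasion_optimal_def
proof (intro conjI allI impI R)
  fix \<sigma>' :: "'w \<Rightarrow> 'm pmf" and \<rho>' assume "R_BR mu0 uR \<sigma>' \<rho>'"
  then show "U mu0 uS \<sigma>' \<rho>' \<le> U mu0 uS \<sigma> \<rho>"
    unfolding payoff persuasion_payoff_def
    by (intro cSup_upper bdd_aboveI[of _ M]) (auto intro!: U_le bounded)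
qed

text \<open>Compare with the profile that pools all other messages by the action they induce and
  recommends the two parts separately: the receiver best responds to it.\<close>
lemma persuasion_optimal_split_bound:
  fixes mu0 :: "'w::finite pmf" and \<sigma> :: "'w \<Rightarrow> 'm::finite pmf" and \<rho> :: "'m \<Rightarrow> 'a::finite pmf"
  assumes prior_pos: "\<forall>\<omega>. pmf mu0 \<omega> > 0" and card: "CARD('a) \<le> CARD('m)"
    and opt: "persuasion_optimal mu0 uS uR \<sigma> \<rho>"
    and y1: "\<forall>\<omega>. 0 \<le> y1 \<omega>" and y2: "\<forall>\<omega>. 0 \<le> y2 \<omega>"
    and split: "\<And>\<omega>. y1 \<omega> + y2 \<omega> = posterior mu0 \<sigma> m \<omega>"
    and c1: "obedient uR y1 c1" and c2: "obedient uR y2 c2"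
  shows "expected uS y1 c1 + expected uS y2 c2
           \<le> (\<Sum>a\<in>UNIV. pmf (\<rho> m) a * expected uS (posterior mu0 \<sigma> m) a)"
proof -
  obtain e :: "'a \<Rightarrow> 'm" where inj: "inj e"
    using card card_le_inj[of "UNIV :: 'a set" "UNIV :: 'm set"] by auto
  let ?others = "pooled_posterior mu0 \<sigma> \<rho> (UNIV - {m})"
  define X where
    "X a \<omega> = ?others a \<omega> + of_bool (a = c1) * y1 \<omega> + of_bool (a = c2) * y2 \<omega>" for a \<omega>
  have X_nonneg: "\<forall>a \<omega>. 0 \<le> X a \<omega>"
    using y1 y2 by (simp add: X_def pooled_posterior_nonneg)
  have X_sum: "\<forall>\<omega>. (\<Sum>a\<in>UNIV. X a \<omega>) = pmf mu0 \<omega>"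
  proof
    fix \<omega>
    have "(\<Sum>a\<in>UNIV. X a \<omega>) = (\<Sum>m'\<in>UNIV - {m}. posterior mu0 \<sigma> m' \<omega>) + posterior mu0 \<sigma> m \<omega>"
      by (simp add: X_def sum.distrib sum_pooled_posterior split[symmetric])
    also have "\<dots> = pmf mu0 \<omega>"
      using sum.remove[of UNIV m "\<lambda>m'. posterior mu0 \<sigma> m' \<omega>"] by (simp add: sum_posterior)
    finally show "(\<Sum>a\<in>UNIV. X a \<omega>) = pmf mu0 \<omega>" .
  qed
  have "obedient uR (X a) (inv e (e a))" for a
  proof -
    have "obedient uR (?others a) a"
      using opt by (simp add: persuasion_optimal_def R_BR_obedient_pooled_posterior)
    moreover have "obedient uR (\<lambda>\<omega>. of_bool (a = c1) * y1 \<omega>) a"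
      using c1 by (cases "a = c1") simp_all
    moreover have "obedient uR (\<lambda>\<omega>. of_bool (a = c2) * y2 \<omega>) a"
      using c2 by (cases "a = c2") simp_all
    ultimately show ?thesis
      unfolding X_def inv_f_f[OF inj] by (intro obedient_add)
  qed
  then have "R_BR mu0 uR (recommendation mu0 e X) (\<lambda>m. return_pmf (inv e m))"
    by (rule R_BR_recommendation[OF prior_pos inj X_nonneg X_sum])
  with opt have "U mu0 uS (recommendation mu0 e X) (\<lambda>m. return_pmf (inv e m)) \<le> U mu0 uS \<sigma> \<rho>"
    by (simp add: persuasion_optimal_def)
  moreover have "U mu0 uS (recommendation mu0 e X) (\<lambda>m. return_pmf (inv e m))
      = (\<Sum>a\<in>UNIV. expected uS (?others a) a) + expected uS y1 c1 + expected uS y2 c2"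
    by (simp add: U_recommendation[OF prior_pos inj X_nonneg X_sum] inv_f_f[OF inj] X_def
        expected_add expected_scale sum.distrib)
  moreover have "U mu0 uS \<sigma> \<rho> = (\<Sum>a\<in>UNIV. expected uS (?others a) a)
      + (\<Sum>a\<in>UNIV. pmf (\<rho> m) a * expected uS (posterior mu0 \<sigma> m) a)"
    by (simp add: U_eq_sum_pooled_posterior expected_pooled_posterior sum.remove[of UNIV m]
        sum.distrib add.commute)
  ultimately show ?thesis by linarith
qed

lemma persuasion_optimal_support_value:
  fixes mu0 :: "'w::finite pmf" and \<sigma> :: "'w \<Rightarrow> 'm::finite pmf" and \<rho> :: "'m \<Rightarrow> 'a::finite pmf"
  assumes prior_pos: "\<forall>\<omega>. pmf mu0 \<omega> > 0" and card: "CARD('a) \<le> CARD('m)"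
    and opt: "persuasion_optimal mu0 uS uR \<sigma> \<rho>" and c: "c \<in> set_pmf (\<rho> m)"
  shows "expected uS (posterior mu0 \<sigma> m) c
           = (\<Sum>a\<in>UNIV. pmf (\<rho> m) a * expected uS (posterior mu0 \<sigma> m) a)"
proof (rule sum_pmf_times_ge_bound_imp_eq[OF _ order.refl c])
  fix c' assume "c' \<in> set_pmf (\<rho> m)"
  with opt have "obedient uR (posterior mu0 \<sigma> m) c'"
    by (simp add: persuasion_optimal_def R_BR_iff_obedient)
  then show "expected uS (posterior mu0 \<sigma> m) c'
      \<le> (\<Sum>a\<in>UNIV. pmf (\<rho> m) a * expected uS (posterior mu0 \<sigma> m) a)"
    using persuasion_optimal_split_bound[OF prior_pos card opt, of "posterior mu0 \<sigma> m" "\<lambda>_. 0"]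
    by (simp add: posterior_nonneg)
qed

section \<open>Consequences of scant-indifferences\<close>

lemma not_in_span_separating_vector:
  fixes v :: "'a::euclidean_space"
  assumes "v \<notin> span A"
  shows "\<exists>d. (\<forall>x\<in>A. d \<bullet> x = 0) \<and> 0 < d \<bullet> v"
proof -
  obtain y z where y: "y \<in> span A" and z: "\<And>x. x \<in> span A \<Longrightarrow> orthogonal z x" and v: "v = y + z"
    using orthogonal_subspace_decomp_exists by metis
  have "z \<noteq> 0" using assms y v by auto
  moreover have "z \<bullet> v = z \<bullet> z"
    using z[OF y] v by (simp add: inner_add_right orthogonal_def)
  ultimately show ?thesis
    using z by (intro exI[of _ z]) (simp add: orthogonal_def span_base)
qed

lemma inner_T_row_SDiff [simp]:
  "x \<bullet> T_row uS uR i (SDiff j) = expected uS (($) x) j - expected uS (($) x) i"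
  by (simp add: T_row_def inner_vec_def expected_def algebra_simps sum_subtractf)

lemma inner_T_row_RDiff [simp]:
  "x \<bullet> T_row uS uR i (RDiff j) = expected uR (($) x) j - expected uR (($) x) i"
  by (simp add: T_row_def inner_vec_def expected_def algebra_simps sum_subtractf)

lemma inner_T_row_IdRow [simp]: "x \<bullet> T_row uS uR i (IdRow \<omega>) = x $ \<omega>"
  by (simp add: T_row_def inner_vec_def if_distrib cong: if_cong)

lemma finite_T_indices: "finite (T_indices i :: ('a::finite, 'w::finite) tidx set)"
proof -
  have "T_indices i = SDiff ` {j. j \<noteq> i} \<union> RDiff ` {j. j \<noteq> i} \<union> range IdRow"
    unfolding T_indices_def by blast
  then show ?thesis by (metis finite finite_UnI finite_imageI)
qed

lemma scant_indifferences_row_not_in_span: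
  fixes uS uR :: "'a::finite \<Rightarrow> 'w::finite \<Rightarrow> real"
  assumes scant: "scant_indifferences uS uR" and sub: "insert k I \<subseteq> T_indices i"
    and k: "k \<notin> I" and card: "card I < CARD('w)"
  shows "T_row uS uR i k \<notin> span (T_row uS uR i ` I)"
proof
  let ?f = "T_row uS uR i"
  assume "?f k \<in> span (?f ` I)"
  have fin: "finite I" using finite_subset[OF sub finite_T_indices] by simp
  have "dim (?f ` insert k I) = min (card (insert k I)) CARD('w)"
    using scant sub unfolding scant_indifferences_def by blast
  also have "\<dots> = card I + 1" using fin k card by simp
  finally have "dim (?f ` insert k I) = card I + 1" .
  moreover have "dim (?f ` insert k I) = dim (?f ` I)"
    using \<open>?f k \<in> span (?f ` I)\<close> by (simp add: dim_insert)
  moreover have "dim (?f ` I) \<le> card I"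
    using fin by (meson card_image_le dim_le_card' finite_imageI order_trans)
  ultimately show False by simp
qed

lemma scant_indifferences_card_lt_if_orthogonal:
  fixes uS uR :: "'a::finite \<Rightarrow> 'w::finite \<Rightarrow> real"
  assumes scant: "scant_indifferences uS uR" and sub: "I \<subseteq> T_indices i"
    and x: "x \<noteq> 0" and orth: "\<forall>j\<in>I. x \<bullet> T_row uS uR i j = 0"
  shows "card I < CARD('w)"
proof (rule ccontr)
  assume "\<not> card I < CARD('w)"
  then have "dim (T_row uS uR i ` I) = CARD('w)"
    using scant sub unfolding scant_indifferences_def by (simp add: min_absorb2)
  then have "span (T_row uS uR i ` I) = UNIV"
    using dim_eq_full[where 'a="real^'w"] by simp
  then have "orthogonal x x"
    using orthogonal_to_span[of x "T_row uS uR i ` I" x] orth by (auto simp: orthogonal_def)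
  with x show False
    by (simp add: orthogonal_self)
qed

text \<open>The direction is orthogonal to the receiver-indifference rows for the actions in R and to the
  identity rows outside the support of w. There are fewer than CARD('w) of these rows, since w
  itself is a nonzero vector orthogonal to all of them, so by scant-indifferences the sender row
  for b stays independent of them.\<close>
lemma scant_indifferences_perturbation_direction:
  fixes uS uR :: "'a::finite \<Rightarrow> 'w::finite \<Rightarrow> real"
  assumes scant: "scant_indifferences uS uR" and w: "w \<noteq> (\<lambda>_. 0)" and ab: "a \<noteq> b"
    and ties: "\<forall>c\<in>R. expected uR w c = expected uR w a"
  shows "\<exists>d. (\<forall>\<omega>. w \<omega> = 0 \<longrightarrow> d \<omega> = 0) \<and> (\<forall>c\<in>R. expected uR d c = expected uR d a)
             \<and> expected uS d a < expected uS d b"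
proof -
  let ?f = "T_row uS uR a"
  define I where "I = RDiff ` (R - {a}) \<union> IdRow ` {\<omega>. w \<omega> = 0}"
  have sub: "insert (SDiff b) I \<subseteq> T_indices a" and b: "SDiff b \<notin> I"
    using ab unfolding I_def T_indices_def by auto
  define wv :: "real^'w" where "wv = (\<chi> \<omega>. w \<omega>)"
  have wv: "($) wv = w" by (simp add: wv_def fun_eq_iff)
  have "wv \<noteq> 0"
    using w by (auto simp: wv_def vec_eq_iff fun_eq_iff)
  moreover have "\<forall>j\<in>I. wv \<bullet> ?f j = 0"
    using ties unfolding I_def by (auto simp: wv)
  ultimately have "card I < CARD('w)"
    using sub by (intro scant_indifferences_card_lt_if_orthogonal[OF scant]) auto
  then have "?f (SDiff b) \<notin> span (?f ` I)"
    using scant_indifferences_row_not_in_span[OF scant sub b] by blast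
  then obtain d where d0: "\<forall>x\<in>?f ` I. d \<bullet> x = 0" and dpos: "0 < d \<bullet> ?f (SDiff b)"
    using not_in_span_separating_vector by blast
  have "\<forall>\<omega>. w \<omega> = 0 \<longrightarrow> d $ \<omega> = 0"
  proof (intro allI impI)
    fix \<omega> assume "w \<omega> = 0"
    with d0 have "d \<bullet> ?f (IdRow \<omega>) = 0" unfolding I_def by blast
    then show "d $ \<omega> = 0" by simp
  qed
  moreover have "\<forall>c\<in>R. expected uR (($) d) c = expected uR (($) d) a"
  proof
    fix c assume "c \<in> R"
    show "expected uR (($) d) c = expected uR (($) d) a"
    proof (cases "c = a")
      case False
      with d0 \<open>c \<in> R\<close> have "d \<bullet> ?f (RDiff c) = 0" unfolding I_def by blast
      then show ?thesis by simp
    qed simp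
  qed
  moreover have "expected uS (($) d) a < expected uS (($) d) b"
    using dpos by simp
  ultimately show ?thesis by blast
qed

lemma scant_indifferences_sender_strict:
  fixes uS uR :: "'a::finite \<Rightarrow> 'w::finite \<Rightarrow> real"
  assumes scant: "scant_indifferences uS uR" and ab: "a \<noteq> b"
  shows "uS a \<omega> \<noteq> uS b \<omega>"
proof
  assume eq: "uS a \<omega> = uS b \<omega>"
  have "(\<lambda>\<omega>'. of_bool (\<omega>' = \<omega>) :: real) \<noteq> (\<lambda>_. 0)"
    by (auto simp: fun_eq_iff)
  then obtain d where d: "\<forall>\<omega>'. (of_bool (\<omega>' = \<omega>) :: real) = 0 \<longrightarrow> d \<omega>' = 0"
    and lt: "expected uS d a < expected uS d b"
    using scant_indifferences_perturbation_direction[OF scant _ ab, of _ "{}"] by blast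
  have "expected uS d c = d \<omega> * uS c \<omega>" for c
    unfolding expected_def using d by (subst sum.remove[of UNIV \<omega>]) (auto intro!: sum.neutral)
  with lt eq show False by simp
qed

section \<open>Optimal profiles are pure on the messages sent\<close>

lemma expected_uminus: "expected u (\<lambda>\<omega>. - y \<omega>) a = - expected u y a"
  unfolding expected_def by (simp add: sum_negf)

lemma obedient_perturbation:
  fixes u :: "'a::finite \<Rightarrow> 'w::finite \<Rightarrow> real"
  assumes w: "\<forall>\<omega>. 0 \<le> w \<omega>" and supp: "\<forall>\<omega>. w \<omega> = 0 \<longrightarrow> d \<omega> = 0" and c: "obedient u w c"
    and ties: "\<forall>c'. obedient u w c' \<longrightarrow> expected u d c' = expected u d c"
  shows "\<forall>\<^sub>F \<epsilon> in at_right 0. (\<forall>\<omega>. 0 \<le> w \<omega> + \<epsilon> * d \<omega>) \<and> obedient u (\<lambda>\<omega>. w \<omega> + \<epsilon> * d \<omega>) c"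
proof -
  have exp: "expected u (\<lambda>\<omega>. w \<omega> + \<epsilon> * d \<omega>) b = expected u w b + \<epsilon> * expected u d b" for \<epsilon> b
    by (simp add: expected_add expected_scale)
  have "\<forall>\<^sub>F \<epsilon> in at_right 0. 0 \<le> w \<omega> + \<epsilon> * d \<omega>" for \<omega>
  proof (cases "w \<omega> = 0")
    case True
    with supp show ?thesis by simp
  next
    case False
    with w have "0 < w \<omega>" by (simp add: order_less_le)
    moreover have "((\<lambda>\<epsilon>. w \<omega> + \<epsilon> * d \<omega>) \<longlongrightarrow> w \<omega>) (at_right 0)"
      by (auto intro!: tendsto_eq_intros)
    ultimately have "\<forall>\<^sub>F \<epsilon> in at_right 0. 0 < w \<omega> + \<epsilon> * d \<omega>"
      by (rule order_tendstoD(1)[rotated])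
    then show ?thesis by (rule eventually_mono) simp
  qed
  moreover have "\<forall>\<^sub>F \<epsilon> in at_right 0.
      expected u (\<lambda>\<omega>. w \<omega> + \<epsilon> * d \<omega>) b \<le> expected u (\<lambda>\<omega>. w \<omega> + \<epsilon> * d \<omega>) c" for b
  proof (cases "obedient u w b")
    case True
    with c have "expected u w b = expected u w c" by (meson obedient_def order_antisym)
    with True ties show ?thesis by (simp add: exp)
  next
    case False
    with c have "0 < expected u w c - expected u w b"
      unfolding obedient_def by (meson diff_gt_0_iff_gt not_le order_trans)
    moreover have "((\<lambda>\<epsilon>. (expected u w c + \<epsilon> * expected u d c) - (expected u w b + \<epsilon> * expected u d b))
        \<longlongrightarrow> expected u w c - expected u w b) (at_right 0)"
      by (auto intro!: tendsto_eq_intros)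
    ultimately have "\<forall>\<^sub>F \<epsilon> in at_right 0.
        0 < (expected u w c + \<epsilon> * expected u d c) - (expected u w b + \<epsilon> * expected u d b)"
      by (rule order_tendstoD(1)[rotated])
    then show ?thesis by (rule eventually_mono) (simp add: exp)
  qed
  ultimately show ?thesis
    unfolding obedient_def by (intro eventually_conj eventually_all_finite) auto
qed

lemma obedient_two_sided_perturbation:
  fixes u :: "'a::finite \<Rightarrow> 'w::finite \<Rightarrow> real"
  assumes w: "\<forall>\<omega>. 0 \<le> w \<omega>" and supp: "\<forall>\<omega>. w \<omega> = 0 \<longrightarrow> d \<omega> = 0"
    and a: "obedient u w a" and b: "obedient u w b"
    and ties: "\<forall>c. obedient u w c \<longrightarrow> expected u d c = expected u d a"
  obtains \<epsilon> :: real where "0 < \<epsilon>"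
    and "\<forall>\<omega>. 0 \<le> w \<omega> + \<epsilon> * d \<omega>" and "obedient u (\<lambda>\<omega>. w \<omega> + \<epsilon> * d \<omega>) b"
    and "\<forall>\<omega>. 0 \<le> w \<omega> + \<epsilon> * - d \<omega>" and "obedient u (\<lambda>\<omega>. w \<omega> + \<epsilon> * - d \<omega>) a"
proof -
  have ties_b: "\<forall>c. obedient u w c \<longrightarrow> expected u d c = expected u d b"
  proof (intro allI impI)
    fix c assume "obedient u w c"
    with ties b have "expected u d c = expected u d a" "expected u d b = expected u d a"
      by blast+
    then show "expected u d c = expected u d b" by simp
  qed
  have ties_a: "\<forall>c. obedient u w c \<longrightarrow> expected u (\<lambda>\<omega>. - d \<omega>) c = expected u (\<lambda>\<omega>. - d \<omega>) a"
    using ties by (simp add: expected_uminus)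
  have "\<forall>\<^sub>F \<epsilon> in at_right 0. 0 < \<epsilon> \<and>
      ((\<forall>\<omega>. 0 \<le> w \<omega> + \<epsilon> * d \<omega>) \<and> obedient u (\<lambda>\<omega>. w \<omega> + \<epsilon> * d \<omega>) b) \<and>
      ((\<forall>\<omega>. 0 \<le> w \<omega> + \<epsilon> * - d \<omega>) \<and> obedient u (\<lambda>\<omega>. w \<omega> + \<epsilon> * - d \<omega>) a)"
    using supp
    by (intro eventually_conj eventually_at_right_less obedient_perturbation[OF w _ b ties_b]
        obedient_perturbation[OF w _ a ties_a]) auto
  then show ?thesis
    using that eventually_happens'[OF trivial_limit_at_right_real] by blast
qed

lemma persuasion_optimal_pure_at_used_message:
  fixes mu0 :: "'w::finite pmf" and \<sigma> :: "'w \<Rightarrow> 'm::finite pmf" and \<rho> :: "'m \<Rightarrow> 'a::finite pmf"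
  assumes prior_pos: "\<forall>\<omega>. pmf mu0 \<omega> > 0" and card: "CARD('a) \<le> CARD('m)"
    and scant: "scant_indifferences uS uR" and opt: "persuasion_optimal mu0 uS uR \<sigma> \<rho>"
    and used: "m \<in> set_pmf (\<sigma> \<omega>\<^sub>0)" and a: "a \<in> set_pmf (\<rho> m)" and b: "b \<in> set_pmf (\<rho> m)"
  shows "a = b"
proof (rule ccontr)
  assume ab: "a \<noteq> b"
  let ?w = "posterior mu0 \<sigma> m"
  have "R_BR mu0 uR \<sigma> \<rho>"
    using opt by (simp add: persuasion_optimal_def)
  with a b have obedient_a: "obedient uR ?w a" and obedient_b: "obedient uR ?w b"
    by (simp_all add: R_BR_iff_obedient)
  have ties: "\<forall>c\<in>{c. obedient uR ?w c}. expected uR ?w c = expected uR ?w a"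
  proof
    fix c assume "c \<in> {c. obedient uR ?w c}"
    then have "expected uR ?w a \<le> expected uR ?w c" by (simp add: obedient_def)
    moreover have "expected uR ?w c \<le> expected uR ?w a" using obedient_a by (simp add: obedient_def)
    ultimately show "expected uR ?w c = expected uR ?w a" by simp
  qed
  have "?w \<omega>\<^sub>0 > 0"
    using prior_pos used by (simp add: posterior_def pmf_positive)
  then have "?w \<noteq> (\<lambda>_. 0)" by (auto simp: fun_eq_iff intro!: exI[of _ "\<omega>\<^sub>0"])
  then obtain d where supp: "\<forall>\<omega>. ?w \<omega> = 0 \<longrightarrow> d \<omega> = 0"
    and d_ties: "\<forall>c\<in>{c. obedient uR ?w c}. expected uR d c = expected uR d a"
    and gain: "expected uS d a < expected uS d b"
    using scant_indifferences_perturbation_direction[OF scant _ ab ties] by blast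
  obtain \<epsilon> where "0 < \<epsilon>"
    and nonneg_b: "\<forall>\<omega>. 0 \<le> ?w \<omega> + \<epsilon> * d \<omega>" and obedient_b': "obedient uR (\<lambda>\<omega>. ?w \<omega> + \<epsilon> * d \<omega>) b"
    and nonneg_a: "\<forall>\<omega>. 0 \<le> ?w \<omega> + \<epsilon> * - d \<omega>" and obedient_a': "obedient uR (\<lambda>\<omega>. ?w \<omega> + \<epsilon> * - d \<omega>) a"
    using obedient_two_sided_perturbation[OF _ supp obedient_a obedient_b] d_ties
    by (auto simp: posterior_nonneg)
  define y1 where "y1 = (\<lambda>\<omega>. 1/2 * (?w \<omega> + \<epsilon> * d \<omega>))"
  define y2 where "y2 = (\<lambda>\<omega>. 1/2 * (?w \<omega> + \<epsilon> * - d \<omega>))"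
  have "obedient uR y1 b"
    unfolding y1_def by (rule obedient_scale[OF obedient_b']) simp
  moreover have "obedient uR y2 a"
    unfolding y2_def by (rule obedient_scale[OF obedient_a']) simp
  moreover have "\<forall>\<omega>. 0 \<le> y1 \<omega>" "\<forall>\<omega>. 0 \<le> y2 \<omega>"
    using nonneg_a nonneg_b by (simp_all add: y1_def y2_def)
  moreover have "y1 \<omega> + y2 \<omega> = ?w \<omega>" for \<omega>
    by (simp add: y1_def y2_def algebra_simps)
  ultimately have "expected uS y1 b + expected uS y2 a \<le> (\<Sum>c\<in>UNIV. pmf (\<rho> m) c * expected uS ?w c)"
    by (intro persuasion_optimal_split_bound[OF prior_pos card opt]) auto
  moreover have "expected uS ?w a = (\<Sum>c\<in>UNIV. pmf (\<rho> m) c * expected uS ?w c)"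
    by (rule persuasion_optimal_support_value[OF prior_pos card opt a])
  moreover have "expected uS ?w b = (\<Sum>c\<in>UNIV. pmf (\<rho> m) c * expected uS ?w c)"
    by (rule persuasion_optimal_support_value[OF prior_pos card opt b])
  moreover have "expected uS y1 b = expected uS ?w b / 2 + \<epsilon> * expected uS d b / 2"
    and "expected uS y2 a = expected uS ?w a / 2 - \<epsilon> * expected uS d a / 2"
    unfolding y1_def y2_def expected_scale expected_add expected_uminus by simp_all
  ultimately have "\<epsilon> * expected uS d b \<le> \<epsilon> * expected uS d a"
    by linarith
  with \<open>0 < \<epsilon>\<close> gain show False
    by simp
qed

section \<open>Straightforward equilibria\<close>

lemma message_value_return_pmf [simp]: "message_value (\<lambda>m. return_pmf (r m)) u m \<omega> = u (r m) \<omega>"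
  by (simp add: message_value_def)

lemma pooled_posterior_outcome_function:
  fixes \<sigma> :: "'w \<Rightarrow> 'm::finite pmf"
  assumes outcome: "\<And>\<omega> m. m \<in> set_pmf (\<sigma> \<omega>) \<Longrightarrow> \<rho> m = return_pmf (f \<omega>)"
  shows "pooled_posterior mu0 \<sigma> \<rho> UNIV a \<omega> = of_bool (f \<omega> = a) * pmf mu0 \<omega>"
proof -
  have "pooled_posterior mu0 \<sigma> \<rho> UNIV a \<omega> = (\<Sum>m\<in>UNIV. of_bool (f \<omega> = a) * pmf mu0 \<omega> * pmf (\<sigma> \<omega>) m)"
    unfolding pooled_posterior_def posterior_def
  proof (intro sum.cong refl)
    fix m
    show "pmf (\<rho> m) a * (pmf mu0 \<omega> * pmf (\<sigma> \<omega>) m) = of_bool (f \<omega> = a) * pmf mu0 \<omega> * pmf (\<sigma> \<omega>) m"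
      by (cases "m \<in> set_pmf (\<sigma> \<omega>)") (auto simp: outcome set_pmf_iff)
  qed
  then show ?thesis by (simp add: sum_distrib_left[symmetric] sum_pmf_eq_1)
qed

lemma straightforward_equilibrium_exists:
  fixes mu0 :: "'w::finite pmf" and \<sigma> :: "'w \<Rightarrow> 'm::finite pmf" and \<rho> :: "'m \<Rightarrow> 'a::finite pmf"
    and f :: "'w \<Rightarrow> 'a"
  assumes prior_pos: "\<forall>\<omega>. pmf mu0 \<omega> > 0" and card: "CARD('a) \<le> CARD('m)"
    and R: "R_BR mu0 uR \<sigma> \<rho>"
    and outcome: "\<And>\<omega> m. m \<in> set_pmf (\<sigma> \<omega>) \<Longrightarrow> \<rho> m = return_pmf (f \<omega>)"
    and sender_best: "\<And>\<omega> \<omega>'. uS (f \<omega>') \<omega> \<le> uS (f \<omega>) \<omega>"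
  shows "\<exists>(\<sigma>' :: 'w \<Rightarrow> 'm pmf) (\<rho>' :: 'm \<Rightarrow> 'a pmf).
           partitional \<sigma>' \<and> pure_strategy \<rho>' \<and> cheap_talk_eq mu0 uS uR \<sigma>' \<rho>' \<and>
           U mu0 uS \<sigma>' \<rho>' = U mu0 uS \<sigma> \<rho> \<and> card (used_messages \<sigma>') \<le> CARD('a)"
proof -
  obtain e :: "'a \<Rightarrow> 'm" where inj: "inj e"
    using card card_le_inj[of "UNIV :: 'a set" "UNIV :: 'm set"] by auto
  define X where "X = pooled_posterior mu0 \<sigma> \<rho> UNIV"
  have X_eq: "X a \<omega> = of_bool (f \<omega> = a) * pmf mu0 \<omega>" for a \<omega>
    unfolding X_def using outcome by (rule pooled_posterior_outcome_function)
  have X_nonneg: "\<forall>a \<omega>. 0 \<le> X a \<omega>" and X_sum: "\<forall>\<omega>. (\<Sum>a\<in>UNIV. X a \<omega>) = pmf mu0 \<omega>"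
    by (simp_all add: X_def pooled_posterior_nonneg sum_pooled_posterior sum_posterior)
  text \<open>Every message, sent or not, is answered by an action in the range of f, so the sender
    has no profitable deviation to an unsent message.\<close>
  define r where "r = f \<circ> inv (e \<circ> f)"
  have r_range: "r m \<in> range f" for m
    by (simp add: r_def)
  have r_e: "r (e (f \<omega>)) = f \<omega>" for \<omega>
    using f_inv_into_f[of "e (f \<omega>)" "e \<circ> f" UNIV] inj by (simp add: r_def inj_eq)
  have r_e_cases: "r (e a) = a \<or> X a = (\<lambda>_. 0)" for a
    by (cases "a \<in> range f") (auto simp: r_e X_eq fun_eq_iff)
  define \<sigma>' where "\<sigma>' = recommendation mu0 e X"
  define \<rho>' :: "'m \<Rightarrow> 'a pmf" where "\<rho>' = (\<lambda>m. return_pmf (r m))"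
  note recommendation = prior_pos inj X_nonneg X_sum
  have set_\<sigma>': "set_pmf (\<sigma>' \<omega>) = {e (f \<omega>)}" for \<omega>
    using prior_pos by (auto simp: \<sigma>'_def set_pmf_recommendation[OF recommendation] X_eq
        less_imp_neq[symmetric])
  have "partitional \<sigma>'"
    unfolding \<sigma>'_def by (rule partitional_recommendation[OF recommendation, of f]) (simp add: X_eq)
  moreover have "pure_strategy \<rho>'"
    by (simp add: pure_strategy_def \<rho>'_def)
  moreover have "R_BR mu0 uR \<sigma>' \<rho>'"
    unfolding \<sigma>'_def \<rho>'_def
  proof (rule R_BR_recommendation[OF recommendation])
    fix a
    show "obedient uR (X a) (r (e a))"
      using r_e_cases[of a] R_BR_obedient_pooled_posterior[OF R] by (auto simp: X_def)
  qed
  moreover have "S_BR mu0 uS \<sigma>' \<rho>'"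
    unfolding S_BR_iff_optimal_messages[OF prior_pos]
  proof (intro allI ballI)
    fix \<omega> m m' assume "m \<in> set_pmf (\<sigma>' \<omega>)"
    then have "m = e (f \<omega>)" by (simp add: set_\<sigma>')
    moreover obtain \<omega>' where "r m' = f \<omega>'" using r_range by blast
    ultimately show "message_value \<rho>' uS m' \<omega> \<le> message_value \<rho>' uS m \<omega>"
      using sender_best by (simp add: \<rho>'_def r_e)
  qed
  moreover have "U mu0 uS \<sigma>' \<rho>' = U mu0 uS \<sigma> \<rho>"
  proof -
    have same_value: "expected uS (X a) (r (e a)) = expected uS (X a) a" for a
      using r_e_cases[of a] by (elim disjE) simp_all
    have "U mu0 uS \<sigma>' \<rho>' = (\<Sum>a\<in>UNIV. expected uS (X a) (r (e a)))"
      unfolding \<sigma>'_def \<rho>'_def by (rule U_recommendation[OF recommendation])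
    also have "\<dots> = (\<Sum>a\<in>UNIV. expected uS (X a) a)"
      using same_value by simp
    also have "\<dots> = U mu0 uS \<sigma> \<rho>"
      by (simp add: U_eq_sum_pooled_posterior X_def)
    finally show ?thesis .
  qed
  moreover have "card (used_messages \<sigma>') \<le> CARD('a)"
    unfolding \<sigma>'_def by (rule card_used_messages_recommendation[OF recommendation])
  ultimately show ?thesis
    unfolding cheap_talk_eq_def by blast
qed

lemma optimal_equilibrium_outcome_function:
  fixes mu0 :: "'w::finite pmf" and \<sigma> :: "'w \<Rightarrow> 'm::finite pmf" and \<rho> :: "'m \<Rightarrow> 'a::finite pmf"
  assumes prior_pos: "\<forall>\<omega>. pmf mu0 \<omega> > 0" and card: "CARD('a) \<le> CARD('m)"
    and scant: "scant_indifferences uS uR"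
    and eq: "cheap_talk_eq mu0 uS uR \<sigma> \<rho>" and opt: "persuasion_optimal mu0 uS uR \<sigma> \<rho>"
  obtains f :: "'w \<Rightarrow> 'a"
  where "\<And>\<omega> m. m \<in> set_pmf (\<sigma> \<omega>) \<Longrightarrow> \<rho> m = return_pmf (f \<omega>)"
    and "\<And>\<omega> \<omega>'. uS (f \<omega>') \<omega> \<le> uS (f \<omega>) \<omega>"
proof -
  have "\<exists>c. \<rho> m = return_pmf c" if "m \<in> set_pmf (\<sigma> \<omega>)" for m \<omega>
  proof -
    obtain c where c: "c \<in> set_pmf (\<rho> m)"
      by (meson set_pmf_not_empty ex_in_conv)
    then have "set_pmf (\<rho> m) \<subseteq> {c}"
      using persuasion_optimal_pure_at_used_message[OF prior_pos card scant opt that] by blast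
    then show ?thesis
      by (auto simp: set_pmf_subset_singleton)
  qed
  then obtain act where act: "\<And>\<omega> m. m \<in> set_pmf (\<sigma> \<omega>) \<Longrightarrow> \<rho> m = return_pmf (act m)"
    by metis
  define pick where "pick \<omega> = (SOME m. m \<in> set_pmf (\<sigma> \<omega>))" for \<omega>
  have pick: "pick \<omega> \<in> set_pmf (\<sigma> \<omega>)" for \<omega>
    unfolding pick_def by (rule someI_ex) (meson set_pmf_not_empty ex_in_conv)
  have message_value_used: "message_value \<rho> uS m \<omega>' = uS (act m) \<omega>'" if "m \<in> set_pmf (\<sigma> \<omega>)" for m \<omega> \<omega>'
    using act[OF that] by (simp add: message_value_def)
  have best: "message_value \<rho> uS m' \<omega> \<le> message_value \<rho> uS m \<omega>" if "m \<in> set_pmf (\<sigma> \<omega>)" for m m' \<omega>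
    using eq that by (simp add: cheap_talk_eq_def S_BR_iff_optimal_messages[OF prior_pos])
  show ?thesis
  proof
    fix \<omega> m assume m: "m \<in> set_pmf (\<sigma> \<omega>)"
    have "message_value \<rho> uS m \<omega> = message_value \<rho> uS (pick \<omega>) \<omega>"
      using best[OF m] best[OF pick] by (meson order_antisym)
    then have "uS (act m) \<omega> = uS (act (pick \<omega>)) \<omega>"
      by (simp add: message_value_used[OF m] message_value_used[OF pick])
    then have "act m = act (pick \<omega>)"
      using scant_indifferences_sender_strict[OF scant] by blast
    then show "\<rho> m = return_pmf (act (pick \<omega>))"
      using act[OF m] by simp
  next
    fix \<omega> \<omega>'
    show "uS (act (pick \<omega>')) \<omega> \<le> uS (act (pick \<omega>)) \<omega>"
      using best[OF pick, of "pick \<omega>'" \<omega>] message_value_used[OF pick[of \<omega>']] message_value_used[OF pick[of \<omega>]] by simp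
  qed
qed

section \<open>The cheap-talk payoff is attained\<close>

lemma babbling_equilibrium_exists:
  fixes mu0 :: "'w::finite pmf" and uS uR :: "'a::finite \<Rightarrow> 'w \<Rightarrow> real"
  assumes prior_pos: "\<forall>\<omega>. pmf mu0 \<omega> > 0"
  shows "\<exists>(\<sigma> :: 'w \<Rightarrow> 'm::finite pmf) \<rho>. cheap_talk_eq mu0 uS uR \<sigma> \<rho>"
proof -
  obtain c where c: "obedient uR (pmf mu0) c"
    unfolding obedient_def using ex_maximizer by blast
  fix m\<^sub>0 :: 'm
  have "posterior mu0 (\<lambda>_. return_pmf m\<^sub>0) m = (\<lambda>\<omega>. indicator {m} m\<^sub>0 * pmf mu0 \<omega>)" for m
    by (simp add: posterior_def fun_eq_iff mult.commute)
  then have "R_BR mu0 uR (\<lambda>_. return_pmf m\<^sub>0) (\<lambda>_. return_pmf c)"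
    by (simp add: R_BR_iff_obedient obedient_scale[OF c])
  moreover have "S_BR mu0 uS (\<lambda>_. return_pmf m\<^sub>0) (\<lambda>_. return_pmf c)"
    by (simp add: S_BR_iff_optimal_messages[OF prior_pos])
  ultimately show ?thesis
    unfolding cheap_talk_eq_def by blast
qed

definition pmf_matrix :: "('x::finite \<Rightarrow> 'y::finite pmf) \<Rightarrow> real^('x \<times> 'y)" where
  "pmf_matrix p = (\<chi> i. pmf (p (fst i)) (snd i))"

lemma pmf_matrix_nth [simp]: "pmf_matrix p $ (x, y) = pmf (p x) y"
  by (simp add: pmf_matrix_def)

definition stochastic_matrices :: "(real^('x::finite \<times> 'y::finite)) set" where
  "stochastic_matrices = {s. (\<forall>i. 0 \<le> s $ i) \<and> (\<forall>x. (\<Sum>y\<in>UNIV. s $ (x, y)) = 1)}"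

definition matrix_payoff ::
    "'w pmf \<Rightarrow> ('a \<Rightarrow> 'w \<Rightarrow> real) \<Rightarrow> real^('w::finite \<times> 'm::finite) \<Rightarrow> real^('m \<times> 'a::finite) \<Rightarrow> real" where
  "matrix_payoff mu0 u s t =
     (\<Sum>\<omega>\<in>UNIV. \<Sum>m\<in>UNIV. \<Sum>a\<in>UNIV. pmf mu0 \<omega> * s $ (\<omega>, m) * t $ (m, a) * u a \<omega>)"

lemma U_eq_matrix_payoff: "U mu0 u \<sigma> \<rho> = matrix_payoff mu0 u (pmf_matrix \<sigma>) (pmf_matrix \<rho>)"
  unfolding U_def matrix_payoff_def by simp

lemma continuous_on_matrix_payoff [continuous_intros]:
  "continuous_on A f \<Longrightarrow> continuous_on A g \<Longrightarrow> continuous_on A (\<lambda>x. matrix_payoff mu0 u (f x) (g x))"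
  unfolding matrix_payoff_def by (intro continuous_intros)

lemma pmf_matrix_stochastic: "pmf_matrix p \<in> stochastic_matrices"
  by (simp add: stochastic_matrices_def pmf_matrix_def sum_pmf_eq_1)

lemma stochastic_matrix_eq_pmf_matrix:
  assumes "s \<in> stochastic_matrices"
  shows "pmf_matrix (\<lambda>x. embed_pmf (\<lambda>y. s $ (x, y))) = s"
  using assms unfolding stochastic_matrices_def vec_eq_iff
  by (auto simp: pmf_matrix_def pmf_embed_pmf_finite)

lemma compact_stochastic_matrices: "compact (stochastic_matrices :: (real^('x::finite \<times> 'y::finite)) set)"
proof (unfold compact_eq_bounded_closed, intro conjI)
  have "s $ i \<le> 1" if s: "s \<in> stochastic_matrices" for s :: "real^('x \<times> 'y)" and i
  proof -
    obtain x y where i: "i = (x, y)" by fastforce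
    have "s $ (x, y) \<le> (\<Sum>y'\<in>UNIV. s $ (x, y'))"
      using s unfolding stochastic_matrices_def by (intro member_le_sum) auto
    with s show ?thesis by (simp add: stochastic_matrices_def i)
  qed
  then have "stochastic_matrices \<subseteq> cbox 0 (1 :: real^('x \<times> 'y))"
    by (auto simp: mem_box_cart stochastic_matrices_def)
  then show "bounded (stochastic_matrices :: (real^('x \<times> 'y)) set)"
    by (rule bounded_subset[OF bounded_cbox])
  show "closed (stochastic_matrices :: (real^('x \<times> 'y)) set)"
    unfolding stochastic_matrices_def Collect_conj_eq
    by (intro closed_Int closed_Collect_all closed_Collect_le closed_Collect_eq continuous_intros)
qed

lemma cheap_talk_payoff_attained:
  fixes mu0 :: "'w::finite pmf" and uS uR :: "'a::finite \<Rightarrow> 'w \<Rightarrow> real"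
  assumes prior_pos: "\<forall>\<omega>. pmf mu0 \<omega> > 0"
  obtains \<sigma> :: "'w \<Rightarrow> 'm::finite pmf" and \<rho>
  where "cheap_talk_eq mu0 uS uR \<sigma> \<rho>" and "U mu0 uS \<sigma> \<rho> = cheap_talk_payoff mu0 uS uR TYPE('m)"
proof -
  define E :: "((real^('w \<times> 'm)) \<times> (real^('m \<times> 'a))) set" where
    "E = (stochastic_matrices \<times> stochastic_matrices)
       \<inter> {p. \<forall>\<sigma>' :: 'w \<Rightarrow> 'm pmf. matrix_payoff mu0 uS (pmf_matrix \<sigma>') (snd p) \<le> matrix_payoff mu0 uS (fst p) (snd p)}
       \<inter> {p. \<forall>\<rho>' :: 'm \<Rightarrow> 'a pmf. matrix_payoff mu0 uR (fst p) (pmf_matrix \<rho>') \<le> matrix_payoff mu0 uR (fst p) (snd p)}"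
  have eq_iff: "cheap_talk_eq mu0 uS uR \<sigma> \<rho> \<longleftrightarrow> (pmf_matrix \<sigma>, pmf_matrix \<rho>) \<in> E" for \<sigma> \<rho>
    by (simp add: E_def cheap_talk_eq_def S_BR_def R_BR_def U_eq_matrix_payoff pmf_matrix_stochastic)
  have "compact E"
    unfolding E_def
    by (intro compact_Int_closed compact_Times compact_stochastic_matrices
        closed_Collect_all closed_Collect_le continuous_intros)
  moreover have "E \<noteq> {}"
    using babbling_equilibrium_exists[OF prior_pos] eq_iff by blast
  moreover have "continuous_on E (\<lambda>q. matrix_payoff mu0 uS (fst q) (snd q))"
    by (intro continuous_intros)
  ultimately have "\<exists>p\<in>E. \<forall>q\<in>E. matrix_payoff mu0 uS (fst q) (snd q) \<le> matrix_payoff mu0 uS (fst p) (snd p)"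
    by (rule continuous_attains_sup)
  then obtain p where p: "p \<in> E"
    and max: "\<forall>q\<in>E. matrix_payoff mu0 uS (fst q) (snd q) \<le> matrix_payoff mu0 uS (fst p) (snd p)"
    by blast
  define \<sigma> :: "'w \<Rightarrow> 'm pmf" where "\<sigma> \<omega> = embed_pmf (\<lambda>m. fst p $ (\<omega>, m))" for \<omega>
  define \<rho> :: "'m \<Rightarrow> 'a pmf" where "\<rho> m = embed_pmf (\<lambda>a. snd p $ (m, a))" for m
  have matrices: "pmf_matrix \<sigma> = fst p" "pmf_matrix \<rho> = snd p"
    using p unfolding \<sigma>_def \<rho>_def E_def by (auto intro: stochastic_matrix_eq_pmf_matrix)
  then have eq: "cheap_talk_eq mu0 uS uR \<sigma> \<rho>"
    using p eq_iff by simp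
  have "U mu0 uS \<sigma>' \<rho>' \<le> U mu0 uS \<sigma> \<rho>" if "cheap_talk_eq mu0 uS uR \<sigma>' \<rho>'"
    for \<sigma>' :: "'w \<Rightarrow> 'm pmf" and \<rho>'
  proof -
    have "(pmf_matrix \<sigma>', pmf_matrix \<rho>') \<in> E"
      using that eq_iff by blast
    from max[rule_format, OF this] matrices show ?thesis
      by (simp add: U_eq_matrix_payoff)
  qed
  with eq have "U mu0 uS \<sigma> \<rho> = cheap_talk_payoff mu0 uS uR TYPE('m)"
    unfolding cheap_talk_payoff_def by (intro cSup_eq_maximum[symmetric]) auto
  with eq show ?thesis by (rule that)
qed

theorem proposition1:
  fixes mu0 :: "'w::finite pmf"
    and uS uR :: "'a::finite \<Rightarrow> 'w \<Rightarrow> real"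
  assumes prior_pos: "\<forall>\<omega>. pmf mu0 \<omega> > 0"
    and M_big: "CARD('m::finite) > max CARD('w) CARD('a)"
    and uS_range: "\<forall>a \<omega>. 0 \<le> uS a \<omega> \<and> uS a \<omega> \<le> 1"
    and uR_range: "\<forall>a \<omega>. 0 \<le> uR a \<omega> \<and> uR a \<omega> \<le> 1"
    and scant: "scant_indifferences uS uR"
    and no_value: "cheap_talk_payoff mu0 uS uR TYPE('m) = persuasion_payoff mu0 uS uR TYPE('m)"
  shows "\<exists>(\<sigma> :: 'w \<Rightarrow> 'm pmf) (\<rho> :: 'm \<Rightarrow> 'a pmf).
           partitional \<sigma> \<and> pure_strategy \<rho> \<and> cheap_talk_eq mu0 uS uR \<sigma> \<rho> \<and>
           U mu0 uS \<sigma> \<rho> = persuasion_payoff mu0 uS uR TYPE('m) \<and>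
           card (used_messages \<sigma>) \<le> CARD('a)"
proof -
  have card: "CARD('a) \<le> CARD('m)"
    using M_big by simp
  obtain \<sigma> :: "'w \<Rightarrow> 'm pmf" and \<rho> :: "'m \<Rightarrow> 'a pmf" where eq: "cheap_talk_eq mu0 uS uR \<sigma> \<rho>"
    and "U mu0 uS \<sigma> \<rho> = cheap_talk_payoff mu0 uS uR TYPE('m)"
    by (rule cheap_talk_payoff_attained[OF prior_pos])
  with no_value have payoff: "U mu0 uS \<sigma> \<rho> = persuasion_payoff mu0 uS uR TYPE('m)"
    by simp
  have R: "R_BR mu0 uR \<sigma> \<rho>"
    using eq by (simp add: cheap_talk_eq_def)
  with payoff uS_range have "persuasion_optimal mu0 uS uR \<sigma> \<rho>"
    by (intro persuasion_optimal_if_attains_payoff) auto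
  then obtain f where outcome: "\<And>\<omega> m. m \<in> set_pmf (\<sigma> \<omega>) \<Longrightarrow> \<rho> m = return_pmf (f \<omega>)"
    and sender_best: "\<And>\<omega> \<omega>'. uS (f \<omega>') \<omega> \<le> uS (f \<omega>) \<omega>"
    using optimal_equilibrium_outcome_function[OF prior_pos card scant eq] by blast
  show ?thesis
    using straightforward_equilibrium_exists[where uS = uS, OF prior_pos card R outcome sender_best]
    by (simp only: payoff)
qed

end
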